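(* Let $q\in\mathbb{C}$ with $|q|<1$ and let $k,l\ge0$ be integers. Then for $x\in[0,1]$, $$B_{k,l}(x,q)=\frac{x^k}{[k]_q!}\sum_{m=0}^l\frac{[m]_q!}{m!}\binom{l}{m}_q\beta_{l-m}^{(k)}((1-x)_q,q)\,\Delta^k0^m,$$ where $\Delta^k0^m=\sum_{j=0}^k\binom{k}{j}(-1)^{k-j}j^m$ (with $0^0=1$).
   Context: For a number $x$, $[x]_q=\frac{1-q^x}{1-q}$; $[n]_q!=[n]_q\cdots[1]_q$, $[0]_q!=1$; $\binom{n}{k}_q=\frac{[n]_q!}{[k]_q![n-k]_q!}$ for $0\le k\le n$ and $0$ for $k>n$. $(1-b)_q^n=\prod_{i=1}^n(1-bq^{i-1})$. $B_{k,n}(x,q)=\binom{n}{k}_q x^k(1-x)_q^{n-k}$ if $n\ge k$ and $0$ if $n<k$. $\Delta^k0^m$ is the $k$-th forward difference ($\Delta f(y)=f(y+1)-f(y)$) of $y\mapsto y^m$ at $y=0$. $B_m^{(k)}$ are the Bernoulli numbers of order $k$: $\left(\frac{t}{e^t-1}\right)^k=\sum_{m\ge0}B_m^{(k)}\frac{t^m}{m!}$. The symbol $\beta_n^{(k)}((1-x)_q,q)$ means $\sum_{m=0}^n\binom{n}{m}_q\frac{[m]_q!}{m!}B_m^{(k)}(1-x)_q^{n-m}$, i.e. the $q$-Bernoulli polynomial of order $k$, $\beta_n^{(k)}(y,q)=\sum_{m=0}^n\binom{n}{m}_q\frac{[m]_q!}{m!}B_m^{(k)}y^{n-m}$ (defined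 by $\left(\frac{z}{e^z-1}\right)^k\sum_{j\ge0}\frac{y^jz^j}{[j]_q!}=\sum_{n\ge0}\beta_n^{(k)}(y,q)\frac{z^n}{[n]_q!}$), with each power $y^j$ replaced umbrally by $(1-x)_q^j$. *)

theory Defs
  imports Complex_Main "HOL-Computational_Algebra.Formal_Power_Series"
begin

definition q_num :: "nat \<Rightarrow> complex \<Rightarrow> complex" where
  "q_num n q = (1 - q ^ n) / (1 - q)"

definition q_fact :: "nat \<Rightarrow> complex \<Rightarrow> complex" where
  "q_fact n q = (\<Prod>i=1..n. q_num i q)"

definition q_binom :: "nat \<Rightarrow> nat \<Rightarrow> complex \<Rightarrow> complex" where
  "q_binom n k q = (if k \<le> n then q_fact n q / (q_fact k q * q_fact (n - k) q) else 0)"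

text \<open>(1 - b)_q^n = prod_{i=1}^n (1 - b q^(i-1)).\<close>
definition q_poch :: "complex \<Rightarrow> nat \<Rightarrow> complex \<Rightarrow> complex" where
  "q_poch b n q = (\<Prod>i=1..n. 1 - b * q ^ (i - 1))"

definition q_bernstein :: "nat \<Rightarrow> nat \<Rightarrow> complex \<Rightarrow> complex \<Rightarrow> complex" where
  "q_bernstein k n x q = (if k \<le> n then q_binom n k q * x ^ k * q_poch x (n - k) q else 0)"

definition delta_pow_zero :: "nat \<Rightarrow> nat \<Rightarrow> complex" where
  "delta_pow_zero k m = (\<Sum>j=0..k. of_nat (k choose j) * (-1) ^ (k - j) * of_nat j ^ m)"

text \<open>Bernoulli numbers of order k: (t/(e^t - 1))^k = sum_m B_m^(k) t^m / m!.
  Here t/(e^t-1) is the formal power series inverse of (e^t - 1)/t.\<close>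
definition bernoulli_gf :: "complex fps" where
  "bernoulli_gf = inverse (fps_shift 1 (fps_exp 1 - 1))"

definition bernoulli_ord :: "nat \<Rightarrow> nat \<Rightarrow> complex" where
  "bernoulli_ord k m = fact m * fps_nth (bernoulli_gf ^ k) m"

text \<open>q-Bernoulli polynomial of order k evaluated umbrally at (1-x)_q:
  beta_n^(k)((1-x)_q,q) = sum_m binom n m_q [m]_q!/m! B_m^(k) (1-x)_q^(n-m).\<close>
definition q_bernoulli_umbral :: "nat \<Rightarrow> nat \<Rightarrow> complex \<Rightarrow> complex \<Rightarrow> complex" where
  "q_bernoulli_umbral k n x q =
     (\<Sum>m=0..n. q_binom n m q * q_fact m q / fact m * bernoulli_ord k m * q_poch x (n - m) q)"

end

theory Submission
  imports Defs
begin

text \<open>Compare coefficients of generating functions in \<open>z\<close>. The coefficients of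
  \<open>(e^z - 1)^k\<close> are \<open>\<Delta>^k 0^m / m!\<close>, and \<open>(e^z - 1)^k (z / (e^z - 1))^k = z^k\<close>. Hence multiplying
  the generating function \<open>(z / (e^z - 1))^k \<Sum>_j (1-x)_q^j z^j / [j]_q!\<close> of the umbral q-Bernoulli
  polynomials by \<open>(e^z - 1)^k\<close> leaves \<open>z^k \<Sum>_j (1-x)_q^j z^j / [j]_q!\<close>, whose coefficient of
  \<open>z^l\<close> is \<open>(1-x)_q^(l-k) / [l-k]_q!\<close>; multiplying by \<open>x^k [l]_q! / [k]_q!\<close> gives \<open>B_{k,l}(x,q)\<close>.
  The hypothesis \<open>|q| < 1\<close> only serves to make the q-factorials nonzero.\<close>

lemma q_fact_nonzero:
  assumes "norm q < 1"
  shows "q_fact n q \<noteq> 0"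
proof -
  have "q_num i q \<noteq> 0" if "i \<ge> 1" for i
  proof -
    have "norm (q ^ i) < 1"
      using that assms by (simp add: norm_power power_less_one_iff)
    then have "q ^ i \<noteq> 1" by auto
    moreover have "q \<noteq> 1" using assms by auto
    ultimately show ?thesis by (simp add: q_num_def)
  qed
  then show ?thesis unfolding q_fact_def by simp
qed

lemma fps_nth_exp_minus_one_power:
  "fps_nth ((fps_exp (1::complex) - 1) ^ k) m = delta_pow_zero k m / fact m"
proof -
  have "(fps_exp (1::complex) - 1) ^ k = (fps_exp 1 + fps_const (-1)) ^ k"
    by (metis diff_conv_add_uminus fps_const_1_eq_1 fps_const_neg)
  also have "\<dots> = (\<Sum>j\<le>k. fps_const (of_nat (k choose j) * (-1) ^ (k - j)) * fps_exp (of_nat j))"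
    unfolding binomial_ring
    by (intro sum.cong refl) (simp add: fps_exp_power_mult fps_of_nat mult_ac flip: fps_const_mult)
  finally show ?thesis
    by (simp add: fps_sum_nth delta_pow_zero_def sum_divide_distrib atLeast0AtMost)
qed

lemma exp_minus_one_mult_bernoulli_gf: "(fps_exp (1::complex) - 1) * bernoulli_gf = fps_X"
proof -
  define S where "S = fps_shift 1 (fps_exp (1::complex) - 1)"
  have "fps_exp (1::complex) - 1 = fps_X * S"
    by (rule fps_ext) (simp add: S_def)
  then have "(fps_exp 1 - 1) * bernoulli_gf = fps_X * (S * inverse S)"
    by (simp add: bernoulli_gf_def S_def mult.assoc)
  also have "S * inverse S = 1"
    by (rule inverse_mult_eq_1') (simp add: S_def)
  finally show ?thesis by simp
qed

definition q_poch_gf :: "complex \<Rightarrow> complex \<Rightarrow> complex fps" where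
  "q_poch_gf x q = Abs_fps (\<lambda>j. q_poch x j q / q_fact j q)"

lemma q_bernoulli_umbral_eq_fps_nth:
  assumes "norm q < 1"
  shows "q_bernoulli_umbral k n x q = q_fact n q * fps_nth (bernoulli_gf ^ k * q_poch_gf x q) n"
  unfolding q_bernoulli_umbral_def q_poch_gf_def fps_mult_nth sum_distrib_left
proof (intro sum.cong refl)
  fix m assume "m \<in> {0..n}"
  with q_fact_nonzero[OF assms] show "q_binom n m q * q_fact m q / fact m * bernoulli_ord k m * q_poch x (n - m) q =
    q_fact n q * (fps_nth (bernoulli_gf ^ k) m * fps_nth (Abs_fps (\<lambda>j. q_poch x j q / q_fact j q)) (n - m))"
    by (simp add: q_binom_def bernoulli_ord_def field_simps)
qed

lemma sum_delta_pow_zero_q_bernoulli_umbral: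
  assumes "norm q < 1"
  shows "(\<Sum>m=0..l. q_fact m q / fact m * q_binom l m q * q_bernoulli_umbral k (l - m) x q * delta_pow_zero k m)
    = q_fact l q * fps_nth ((fps_exp 1 - 1) ^ k * (bernoulli_gf ^ k * q_poch_gf x q)) l"
  unfolding fps_mult_nth[of _ _ l] sum_distrib_left
proof (intro sum.cong refl)
  fix m assume "m \<in> {0..l}"
  with q_fact_nonzero[OF assms] show "q_fact m q / fact m * q_binom l m q * q_bernoulli_umbral k (l - m) x q * delta_pow_zero k m =
    q_fact l q * (fps_nth ((fps_exp 1 - 1) ^ k) m * fps_nth (bernoulli_gf ^ k * q_poch_gf x q) (l - m))"
    by (simp add: fps_nth_exp_minus_one_power q_bernoulli_umbral_eq_fps_nth[OF assms] q_binom_def field_simps)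
qed

theorem corollary11:
  fixes q :: complex and k l :: nat and x :: real
  assumes "norm q < 1" and "0 \<le> x" and "x \<le> 1"
  shows "q_bernstein k l (of_real x) q =
    (of_real x) ^ k / q_fact k q *
      (\<Sum>m=0..l. q_fact m q / fact m * q_binom l m q *
         q_bernoulli_umbral k (l - m) (of_real x) q * delta_pow_zero k m)"
proof -
  let ?C = "q_poch_gf (of_real x) q"
  have "(\<Sum>m=0..l. q_fact m q / fact m * q_binom l m q *
         q_bernoulli_umbral k (l - m) (of_real x) q * delta_pow_zero k m)
      = q_fact l q * fps_nth ((fps_exp 1 - 1) ^ k * (bernoulli_gf ^ k * ?C)) l"
    by (rule sum_delta_pow_zero_q_bernoulli_umbral[OF assms(1)])
  also have "(fps_exp 1 - 1) ^ k * (bernoulli_gf ^ k * ?C) = fps_X ^ k * ?C"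
    by (simp add: exp_minus_one_mult_bernoulli_gf mult.assoc [symmetric] flip: power_mult_distrib)
  also have "fps_nth (fps_X ^ k * ?C) l = (if l < k then 0 else q_poch (of_real x) (l - k) q / q_fact (l - k) q)"
    by (simp add: fps_X_power_mult_nth q_poch_gf_def)
  finally show ?thesis
    using q_fact_nonzero[OF assms(1)] by (auto simp: q_bernstein_def q_binom_def field_simps)
qed

end
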